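(* Let $G$ be a graph on which a vertex-edge marking game $\mathcal G$ is being played, and let $n\ge 0$ be an integer. If at some round it is Bob's turn and there is an $n$-free path in $G$, then Bob has a strategy forcing the final score of $\mathcal G$ to be at least $n+3$.
   Context: The vertex-edge marking game on a graph $G=(V,E)$ (finite or infinite) is played by Alice, who marks vertices, and Bob, who marks edges. Initially nothing is marked. The game proceeds in rounds $r=1,2,\dots$; in each round Alice first marks one unmarked vertex, then Bob marks one unmarked edge. For a finite graph the game ends when either player has no move; for an infinite graph it continues forever. After round $r$, the vertex score of $v$ is $0$ if $v$ is marked, and otherwise the number of marked edges incident to $v$. The $r$-round score is the supremum over $v\in V$ of the vertex scores after round $r$, and the final score of the game is the supremum of the $r$-round scores over all rounds. In a position of the game, an $n$-free path is a path $P$ in $G$ with vertex sequence $v_0,\dots,v_k$, $k\ge 2$, such that: the first and last edges $v_0v_1$ and $v_{k-1}v_k$ are marked; the interior vertices $v_1,\dots,v_{k-1}$ are unmarked; and each interior vertex is incident to at least $n+1$ edges not in $P$, at least $n$ of which are marked. *)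

theory Defs
  imports Main "HOL-Library.Extended_Nat"
begin

definition graph :: "'v set \<Rightarrow> 'v set set \<Rightarrow> bool" where
  "graph V E \<longleftrightarrow> (\<forall>e\<in>E. \<exists>u v. u \<in> V \<and> v \<in> V \<and> u \<noteq> v \<and> e = {u, v})"

text \<open>A history is the list of completed rounds (Alice's vertex, Bob's edge).\<close>
definition mverts :: "('v \<times> 'v set) list \<Rightarrow> 'v set" where
  "mverts h = fst ` set h"

definition medges :: "('v \<times> 'v set) list \<Rightarrow> 'v set set" where
  "medges h = snd ` set h"

inductive legal_hist :: "'v set \<Rightarrow> 'v set set \<Rightarrow> ('v \<times> 'v set) list \<Rightarrow> bool"
  for V E where
  Nil: "legal_hist V E []"
| snoc: "legal_hist V E h \<Longrightarrow> x \<in> V \<Longrightarrow> x \<notin> mverts h \<Longrightarrow> e \<in> E \<Longrightarrow> e \<notin> medges h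
         \<Longrightarrow> legal_hist V E (h @ [(x, e)])"

definition vertex_score :: "'v set \<Rightarrow> 'v set set \<Rightarrow> 'v \<Rightarrow> nat" where
  "vertex_score MV ME v = (if v \<in> MV then 0 else card {e \<in> ME. v \<in> e})"

definition round_score :: "'v set \<Rightarrow> ('v \<times> 'v set) list \<Rightarrow> enat" where
  "round_score V h = (SUP v\<in>V. enat (vertex_score (mverts h) (medges h) v))"

text \<open>A play: rounds p 0, p 1, ..., p (N-1) (N possibly infinite).\<close>
definition final_score :: "'v set \<Rightarrow> (nat \<Rightarrow> 'v \<times> 'v set) \<Rightarrow> enat \<Rightarrow> enat" where
  "final_score V p N = (SUP r\<in>{r. enat r \<le> N}. round_score V (map p [0..<r]))"

text \<open>Every prefix is legal, and if the play is finite the game has ended: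
  Alice has no unmarked vertex, or Bob has no unmarked edge (any further Alice move
  in an incomplete last round cannot raise the score).\<close>
definition maximal_play :: "'v set \<Rightarrow> 'v set set \<Rightarrow> (nat \<Rightarrow> 'v \<times> 'v set) \<Rightarrow> enat \<Rightarrow> bool" where
  "maximal_play V E p N \<longleftrightarrow>
     (\<forall>r. enat r \<le> N \<longrightarrow> legal_hist V E (map p [0..<r])) \<and>
     (\<forall>m. N = enat m \<longrightarrow> V \<subseteq> mverts (map p [0..<m]) \<or> E \<subseteq> medges (map p [0..<m]))"

text \<open>A (history dependent) strategy for Bob: given the completed rounds and Alice's current
  vertex, it returns a legal edge whenever Bob has a move.\<close>
definition bob_strategy :: "'v set \<Rightarrow> 'v set set \<Rightarrow> (('v \<times> 'v set) list \<Rightarrow> 'v \<Rightarrow> 'v set) \<Rightarrow> bool" where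
  "bob_strategy V E \<sigma> \<longleftrightarrow>
     (\<forall>h x. legal_hist V E h \<and> x \<in> V \<and> x \<notin> mverts h \<and> E - medges h \<noteq> {}
        \<longrightarrow> \<sigma> h x \<in> E \<and> \<sigma> h x \<notin> medges h)"

text \<open>The play extends history h, Alice's move in the current round is x, and from
  the current round on Bob follows \<sigma>.\<close>
definition follows :: "('v \<times> 'v set) list \<Rightarrow> 'v \<Rightarrow> (('v \<times> 'v set) list \<Rightarrow> 'v \<Rightarrow> 'v set)
                        \<Rightarrow> (nat \<Rightarrow> 'v \<times> 'v set) \<Rightarrow> enat \<Rightarrow> bool" where
  "follows h x \<sigma> p N \<longleftrightarrow>
     (\<forall>i<length h. p i = h ! i) \<and> enat (length h) \<le> N \<and>
     (enat (length h) < N \<longrightarrow> fst (p (length h)) = x) \<and>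
     (\<forall>i. length h \<le> i \<and> enat i < N \<longrightarrow> snd (p i) = \<sigma> (map p [0..<i]) (fst (p i)))"

definition at_least :: "nat \<Rightarrow> 'a set \<Rightarrow> bool" where
  "at_least k A \<longleftrightarrow> infinite A \<or> k \<le> card A"

definition path_edges :: "'v list \<Rightarrow> 'v set set" where
  "path_edges vs = {{vs ! i, vs ! Suc i} | i. i < length vs - 1}"

definition n_free_path :: "'v set \<Rightarrow> 'v set set \<Rightarrow> 'v set \<Rightarrow> 'v set set \<Rightarrow> nat \<Rightarrow> 'v list \<Rightarrow> bool" where
  "n_free_path V E MV ME n vs \<longleftrightarrow>
     (let k = length vs - 1 in
      3 \<le> length vs \<and> distinct vs \<and> set vs \<subseteq> V \<and>
      (\<forall>i<k. {vs ! i, vs ! Suc i} \<in> E) \<and>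
      {vs ! 0, vs ! 1} \<in> ME \<and> {vs ! (k - 1), vs ! k} \<in> ME \<and>
      (\<forall>i. 0 < i \<and> i < k \<longrightarrow>
          vs ! i \<notin> MV \<and>
          at_least (n + 1) {e \<in> E. vs ! i \<in> e \<and> e \<notin> path_edges vs} \<and>
          at_least n {e \<in> ME. vs ! i \<in> e \<and> e \<notin> path_edges vs}))"

end

theory Submission
  imports Defs
begin

(* Bob always works on a shortest n-free path v_0 v_1 ... v_k in the current position (Alice's
   vertex of the round already marked). If k >= 3 he marks v_1 v_2, which by minimality was
   unmarked. Whichever vertex Alice marks next, v_1 v_2 ... v_k (if she marked v_1) or v_0 v_1 v_2
   (otherwise) is then a strictly shorter n-free path. So after finitely many rounds k = 2: the
   interior vertex v_1 is unmarked, carries n + 2 marked edges and lies on at least n + 3 edges,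
   so Bob marks one more edge at it (or all are marked already) and its score reaches n + 3.
   If instead the game stops early, an n-free path survives; its vertex v_1 is unmarked, so all
   edges are marked, among them the n + 3 edges at v_1. *)

lemma at_least_mono: "at_least k A \<Longrightarrow> A \<subseteq> B \<Longrightarrow> at_least k B"
  unfolding at_least_def by (meson card_mono infinite_super order_trans)

lemma at_least_insert: "at_least k A \<Longrightarrow> a \<notin> A \<Longrightarrow> at_least (Suc k) (insert a A)"
  unfolding at_least_def by auto

lemma vertex_score_ge:
  assumes "v \<notin> MV" "finite ME" "at_least k {e \<in> ME. v \<in> e}"
  shows "k \<le> vertex_score MV ME v"
  using assms card_mono[of ME "{e \<in> ME. v \<in> e}"] unfolding vertex_score_def at_least_def
  by (auto intro: finite_subset)

lemma path_edges_nth: "i < length vs - 1 \<Longrightarrow> {vs ! i, vs ! Suc i} \<in> path_edges vs"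
  unfolding path_edges_def by blast

lemma n_free_path_interior:
  assumes "n_free_path V E MV ME n vs" "0 < i" "i < length vs - 1"
  shows "vs ! i \<notin> MV" "at_least (n + 1) {e \<in> E. vs ! i \<in> e \<and> e \<notin> path_edges vs}"
    "at_least n {e \<in> ME. vs ! i \<in> e \<and> e \<notin> path_edges vs}"
  using assms unfolding n_free_path_def Let_def by auto

lemma n_free_path_mono:
  assumes "n_free_path V E MV ME n vs" "ME \<subseteq> ME'"
    and "\<And>i. 0 < i \<Longrightarrow> i < length vs - 1 \<Longrightarrow> vs ! i \<notin> MV'"
  shows "n_free_path V E MV' ME' n vs"
proof -
  have "at_least n {e \<in> ME'. vs ! i \<in> e \<and> e \<notin> path_edges vs}"
    if "0 < i" "i < length vs - 1" for i
    by (rule at_least_mono[OF n_free_path_interior(3)[OF assms(1) that]]) (use assms(2) in blast)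
  with assms show ?thesis
    unfolding n_free_path_def Let_def by blast
qed

lemma n_free_path_unmark: "n_free_path V E MV ME n vs \<Longrightarrow> MV' \<subseteq> MV \<Longrightarrow> n_free_path V E MV' ME n vs"
  by (rule n_free_path_mono) (auto dest: n_free_path_interior(1))

lemma n_free_path_segment:
  assumes fp: "n_free_path V E MV ME n vs" and ij: "i + 3 \<le> j" "j \<le> length vs"
    and first: "{vs ! i, vs ! Suc i} \<in> ME" and last: "{vs ! (j - 2), vs ! (j - 1)} \<in> ME"
  shows "n_free_path V E MV ME n (drop i (take j vs))" (is "n_free_path _ _ _ _ _ ?ws")
proof -
  have len: "length ?ws = j - i" using ij by simp
  have nth: "?ws ! k = vs ! (i + k)" if "k < j - i" for k
    using that ij by simp
  have sub: "path_edges ?ws \<subseteq> path_edges vs"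
  proof
    fix e assume "e \<in> path_edges ?ws"
    then obtain k where "k < j - i - 1" "e = {?ws ! k, ?ws ! Suc k}"
      unfolding path_edges_def len by blast
    then show "e \<in> path_edges vs"
      using nth[of k] nth[of "Suc k"] ij path_edges_nth[of "i + k" vs] by auto
  qed
  have "at_least (n + 1) {e \<in> E. ?ws ! k \<in> e \<and> e \<notin> path_edges ?ws}
      \<and> at_least n {e \<in> ME. ?ws ! k \<in> e \<and> e \<notin> path_edges ?ws} \<and> ?ws ! k \<notin> MV"
    if "0 < k" "k < j - i - 1" for k
  proof -
    have k: "0 < i + k" "i + k < length vs - 1" "?ws ! k = vs ! (i + k)"
      using that ij nth[of k] by auto
    show ?thesis
      unfolding k(3) using n_free_path_interior[OF fp k(1,2)] sub
      by (auto elim!: at_least_mono)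
  qed
  moreover have "{?ws ! k, ?ws ! Suc k} \<in> E" if "k < j - i - 1" for k
    using fp that ij nth[of k] nth[of "Suc k"] unfolding n_free_path_def Let_def by auto
  moreover have "{?ws ! 0, ?ws ! 1} \<in> ME" "{?ws ! (j - i - 1 - 1), ?ws ! (j - i - 1)} \<in> ME"
    using first last ij nth[of 0] nth[of 1] nth[of "j - i - 1 - 1"] nth[of "j - i - 1"]
    by (auto simp: numeral_eq_Suc)
  moreover have "distinct ?ws" "set ?ws \<subseteq> V"
    using fp unfolding n_free_path_def Let_def by (auto dest: in_set_dropD in_set_takeD)
  ultimately show ?thesis
    using ij unfolding n_free_path_def Let_def len by auto
qed

lemma at_least_add_path_edges:
  assumes "at_least k {e \<in> S. vs ! 1 \<in> e \<and> e \<notin> path_edges vs}"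
    and "{vs ! 0, vs ! 1} \<in> S" "{vs ! 1, vs ! 2} \<in> S" "distinct vs" "3 \<le> length vs"
  shows "at_least (k + 2) {e \<in> S. vs ! 1 \<in> e}"
proof -
  have on_path: "{vs ! 0, vs ! 1} \<in> path_edges vs" "{vs ! 1, vs ! 2} \<in> path_edges vs"
    using assms(5) path_edges_nth[of 0 vs] path_edges_nth[of 1 vs] by (auto simp: numeral_2_eq_2)
  have "0 < length vs" "1 < length vs" "2 < length vs" using assms(5) by auto
  then have "vs ! 0 \<noteq> vs ! 1" "vs ! 0 \<noteq> vs ! 2"
    by (simp_all add: nth_eq_iff_index_eq[OF assms(4)])
  then have "{vs ! 0, vs ! 1} \<noteq> {vs ! 1, vs ! 2}" by (auto simp: doubleton_eq_iff)
  with assms(1) on_path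
  have "at_least (Suc (Suc k))
      (insert {vs ! 0, vs ! 1} (insert {vs ! 1, vs ! 2} {e \<in> S. vs ! 1 \<in> e \<and> e \<notin> path_edges vs}))"
    by (intro at_least_insert) auto
  then show ?thesis
    unfolding add_2_eq_Suc' by (rule at_least_mono) (use assms(2,3) in auto)
qed

lemma n_free_path_second_vertex:
  assumes "n_free_path V E MV ME n vs"
  shows "vs ! 1 \<in> V" "vs ! 1 \<notin> MV" "at_least (n + 3) {e \<in> E. vs ! 1 \<in> e}"
proof -
  have len: "3 \<le> length vs" and "distinct vs" "set vs \<subseteq> V"
    and "\<forall>i < length vs - 1. {vs ! i, vs ! Suc i} \<in> E"
    using assms unfolding n_free_path_def Let_def by auto
  moreover have "0 < (1::nat)" "1 < length vs - 1" using len by auto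
  ultimately show "vs ! 1 \<in> V" "vs ! 1 \<notin> MV" "at_least (n + 3) {e \<in> E. vs ! 1 \<in> e}"
    using n_free_path_interior[OF assms, of 1] at_least_add_path_edges[of "n + 1" E vs]
    by (auto simp: numeral_2_eq_2 numeral_3_eq_3)
qed

lemma n_free_path_3_marked:
  assumes "n_free_path V E MV ME n vs" "length vs = 3"
  shows "at_least (n + 2) {e \<in> ME. vs ! 1 \<in> e}"
  using assms n_free_path_interior[OF assms(1), of 1] at_least_add_path_edges[of n ME vs]
  unfolding n_free_path_def Let_def by (auto simp: numeral_2_eq_2)

lemma n_free_path_3_score:
  assumes "n_free_path V E MV ME n vs" "length vs = 3" "finite ME"
    and "e \<notin> ME \<and> vs ! 1 \<in> e \<or> {e' \<in> E. vs ! 1 \<in> e'} \<subseteq> ME"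
  shows "n + 3 \<le> vertex_score MV (insert e ME) (vs ! 1)"
proof (rule vertex_score_ge)
  show "vs ! 1 \<notin> MV" "finite (insert e ME)"
    using n_free_path_second_vertex(2)[OF assms(1)] assms(3) by auto
  show "at_least (n + 3) {e' \<in> insert e ME. vs ! 1 \<in> e'}"
    using assms(4)
  proof
    assume e: "e \<notin> ME \<and> vs ! 1 \<in> e"
    then have "at_least (n + 3) (insert e {e' \<in> ME. vs ! 1 \<in> e'})"
      using at_least_insert[OF n_free_path_3_marked[OF assms(1,2)], of e]
      by (simp add: numeral_3_eq_3)
    then show ?thesis by (rule at_least_mono) (use e in auto)
  next
    assume "{e' \<in> E. vs ! 1 \<in> e'} \<subseteq> ME"
    then show ?thesis
      by (intro at_least_mono[OF n_free_path_second_vertex(3)[OF assms(1)]]) auto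
  qed
qed

lemma n_free_path_shorten:
  assumes fp: "n_free_path V E MV ME n vs" and len: "4 \<le> length vs"
    and marked: "{vs ! 1, vs ! 2} \<in> ME"
  shows "\<exists>ws. n_free_path V E (insert z MV) ME n ws \<and> length ws < length vs"
proof -
  have last: "{vs ! (length vs - 2), vs ! (length vs - 1)} \<in> ME" and "distinct vs"
    using fp unfolding n_free_path_def Let_def by (auto simp: numeral_2_eq_2)
  show ?thesis
  proof (cases "z = vs ! 1")
    case True
    have "n_free_path V E MV ME n (drop 1 vs)"
      using n_free_path_segment[OF fp _ _ _ last] marked len by (simp add: numeral_2_eq_2)
    then have "n_free_path V E (insert z MV) ME n (drop 1 vs)"
      by (rule n_free_path_mono)
        (use n_free_path_interior(1)[OF fp] True in \<open>auto simp: nth_eq_iff_index_eq[OF \<open>distinct vs\<close>]\<close>)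
    then show ?thesis using len by fastforce
  next
    case False
    have "n_free_path V E MV ME n (take 3 vs)"
      using n_free_path_segment[OF fp, of 0 3] marked fp len
      unfolding n_free_path_def Let_def by (simp add: numeral_eq_Suc)
    then have "n_free_path V E (insert z MV) ME n (take 3 vs)"
      by (rule n_free_path_mono)
        (use n_free_path_interior(1)[OF fp, of 1] len False in \<open>auto simp: numeral_2_eq_2 less_Suc_eq\<close>)
    then show ?thesis using len by fastforce
  qed
qed

definition shortest_free_path :: "'v set \<Rightarrow> 'v set set \<Rightarrow> nat \<Rightarrow> 'v set \<Rightarrow> 'v set set \<Rightarrow> 'v list"
  where "shortest_free_path V E n MV ME = (ARG_MIN length ws. n_free_path V E MV ME n ws)"

lemma shortest_free_path:
  assumes "n_free_path V E MV ME n vs"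
  shows "n_free_path V E MV ME n (shortest_free_path V E n MV ME)"
    "length (shortest_free_path V E n MV ME) \<le> length vs"
  using arg_min_nat_lemma[of "n_free_path V E MV ME n" vs length, OF assms] assms
  unfolding shortest_free_path_def by auto

lemma shortest_free_path_second_edge_unmarked:
  assumes "n_free_path V E MV ME n vs" "4 \<le> length (shortest_free_path V E n MV ME)"
  shows "{shortest_free_path V E n MV ME ! 1, shortest_free_path V E n MV ME ! 2} \<notin> ME"
proof
  let ?ws = "shortest_free_path V E n MV ME"
  assume "{?ws ! 1, ?ws ! 2} \<in> ME"
  from n_free_path_shorten[OF shortest_free_path(1)[OF assms(1)] assms(2) this]
  obtain ws where ws: "n_free_path V E (insert (?ws ! 0) MV) ME n ws"
    and shorter: "length ws < length ?ws"
    by blast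
  from ws have "n_free_path V E MV ME n ws" by (rule n_free_path_unmark) auto
  with shorter show False using shortest_free_path(2) by fastforce
qed

(* MV already contains Alice's vertex of the current round. If there is no n-free path, ws is an
   unspecified list and Bob merely marks some unmarked edge. *)
definition bob_edge :: "'v set \<Rightarrow> 'v set set \<Rightarrow> nat \<Rightarrow> 'v set \<Rightarrow> 'v set set \<Rightarrow> 'v set" where
  "bob_edge V E n MV ME =
     (let ws = shortest_free_path V E n MV ME in
      if n_free_path V E MV ME n ws \<and> 4 \<le> length ws then {ws ! 1, ws ! 2}
      else SOME e. e \<in> E - ME \<and> (ws ! 1 \<in> e \<or> (\<forall>e' \<in> E - ME. ws ! 1 \<notin> e')))"

definition bob_sigma :: "'v set \<Rightarrow> 'v set set \<Rightarrow> nat \<Rightarrow> ('v \<times> 'v set) list \<Rightarrow> 'v \<Rightarrow> 'v set"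
  where "bob_sigma V E n h y = bob_edge V E n (insert y (mverts h)) (medges h)"

lemma bob_edge_choice:
  assumes "E - ME \<noteq> {}"
  shows "(SOME e. e \<in> E - ME \<and> (v \<in> e \<or> (\<forall>e' \<in> E - ME. v \<notin> e'))) \<in> E - ME \<and>
    (v \<in> (SOME e. e \<in> E - ME \<and> (v \<in> e \<or> (\<forall>e' \<in> E - ME. v \<notin> e'))) \<or> (\<forall>e' \<in> E - ME. v \<notin> e'))"
  by (rule someI_ex) (use assms in blast)

lemma bob_edge_unmarked:
  assumes "E - ME \<noteq> {}"
  shows "bob_edge V E n MV ME \<in> E - ME"
proof (cases "n_free_path V E MV ME n (shortest_free_path V E n MV ME) \<and>
    4 \<le> length (shortest_free_path V E n MV ME)")
  case True
  let ?ws = "shortest_free_path V E n MV ME"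
  have "{?ws ! 1, ?ws ! Suc 1} \<in> E"
    using True unfolding n_free_path_def Let_def by auto
  moreover have "{?ws ! 1, ?ws ! 2} \<notin> ME"
    using True by (intro shortest_free_path_second_edge_unmarked) auto
  ultimately show ?thesis
    using True unfolding bob_edge_def Let_def by (simp add: numeral_2_eq_2)
next
  case False
  then show ?thesis
    using bob_edge_choice[OF assms] unfolding bob_edge_def Let_def by auto
qed

lemma bob_strategy_bob_sigma: "bob_strategy V E (bob_sigma V E n)"
  unfolding bob_strategy_def bob_sigma_def using bob_edge_unmarked by blast

lemma bob_edge_progress:
  assumes fp: "n_free_path V E MV ME n vs" and fin: "finite ME"
  defines "e \<equiv> bob_edge V E n MV ME"
  shows "(\<exists>v \<in> V. n + 3 \<le> vertex_score MV (insert e ME) v) \<or>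
    (\<forall>z. \<exists>ws. n_free_path V E (insert z MV) (insert e ME) n ws \<and> length ws < length vs)"
proof -
  let ?ws = "shortest_free_path V E n MV ME"
  note ws = shortest_free_path[OF fp]
  have "3 \<le> length ?ws" using ws(1) unfolding n_free_path_def Let_def by simp
  then consider "length ?ws = 3" | "4 \<le> length ?ws" by linarith
  then show ?thesis
  proof cases
    case 1
    have "e \<notin> ME \<and> ?ws ! 1 \<in> e \<or> {e' \<in> E. ?ws ! 1 \<in> e'} \<subseteq> ME"
    proof (cases "E - ME = {}")
      case False
      have "e = (SOME e. e \<in> E - ME \<and> (?ws ! 1 \<in> e \<or> (\<forall>e' \<in> E - ME. ?ws ! 1 \<notin> e')))"
        using 1 unfolding e_def bob_edge_def Let_def by simp
      with bob_edge_choice[OF False, of "?ws ! 1"] show ?thesis by auto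
    qed auto
    then have "n + 3 \<le> vertex_score MV (insert e ME) (?ws ! 1)"
      by (rule n_free_path_3_score[OF ws(1) 1 fin])
    then show ?thesis using n_free_path_second_vertex(1)[OF ws(1)] by blast
  next
    case 2
    then have "e = {?ws ! 1, ?ws ! 2}"
      using ws(1) unfolding e_def bob_edge_def Let_def by simp
    moreover have "n_free_path V E MV (insert e ME) n ?ws"
      by (rule n_free_path_mono[OF ws(1)]) (auto dest: n_free_path_interior(1)[OF ws(1)])
    ultimately have "\<exists>ws. n_free_path V E (insert z MV) (insert e ME) n ws \<and> length ws < length ?ws"
      for z using 2 by (intro n_free_path_shorten) auto
    then show ?thesis using ws(2) by (meson order_less_le_trans)
  qed
qed

lemma n_free_path_final_position:
  assumes fp: "n_free_path V E MV ME n vs" and "finite ME" "V \<subseteq> MV \<or> E \<subseteq> ME"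
  shows "\<exists>v \<in> V. n + 3 \<le> vertex_score MV ME v"
proof
  note v = n_free_path_second_vertex[OF fp]
  with assms(3) have "{e \<in> E. vs ! 1 \<in> e} \<subseteq> {e \<in> ME. vs ! 1 \<in> e}" by blast
  with v(3) have "at_least (n + 3) {e \<in> ME. vs ! 1 \<in> e}" by (rule at_least_mono)
  with v(2) assms(2) show "n + 3 \<le> vertex_score MV ME (vs ! 1)" by (rule vertex_score_ge)
  show "vs ! 1 \<in> V" by (fact v(1))
qed

lemma final_score_ge:
  assumes "enat r \<le> N" "v \<in> V" "k \<le> vertex_score (mverts (map p [0..<r])) (medges (map p [0..<r])) v"
  shows "enat k \<le> final_score V p N"
proof -
  have "enat k \<le> enat (vertex_score (mverts (map p [0..<r])) (medges (map p [0..<r])) v)"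
    using assms(3) by simp
  also have "\<dots> \<le> round_score V (map p [0..<r])"
    unfolding round_score_def by (rule SUP_upper) (rule assms(2))
  also have "\<dots> \<le> final_score V p N"
    unfolding final_score_def by (rule SUP_upper) (simp add: assms(1))
  finally show ?thesis .
qed

lemma mverts_map_upt_Suc: "mverts (map p [0..<Suc r]) = insert (fst (p r)) (mverts (map p [0..<r]))"
  unfolding mverts_def by auto

lemma medges_map_upt_Suc: "medges (map p [0..<Suc r]) = insert (snd (p r)) (medges (map p [0..<r]))"
  unfolding medges_def by auto

lemma finite_medges: "finite (medges h)"
  unfolding medges_def by simp

locale bob_free_path_play =
  fixes V :: "'v set" and E :: "'v set set" and n :: nat
    and h :: "('v \<times> 'v set) list" and x :: 'v and vs :: "'v list"
    and p :: "nat \<Rightarrow> 'v \<times> 'v set" and N :: enat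
  assumes maximal: "maximal_play V E p N"
    and follows: "follows h x (bob_sigma V E n) p N"
    and start: "n_free_path V E (insert x (mverts h)) (medges h) n vs"
begin

abbreviation hist :: "nat \<Rightarrow> ('v \<times> 'v set) list" where
  "hist r \<equiv> map p [0..<r]"

lemma hist_length: "hist (length h) = h"
  using follows unfolding follows_def by (intro nth_equalityI) auto

lemma score_reached:
  assumes "enat r \<le> N" "\<exists>v \<in> V. n + 3 \<le> vertex_score (mverts (hist r)) (medges (hist r)) v"
  shows "enat (n + 3) \<le> final_score V p N"
  using assms(2) by (blast intro: final_score_ge[OF assms(1)])

lemma bob_round:
  assumes "length h \<le> r" "enat (Suc r) \<le> N"
    and fp: "n_free_path V E (insert (fst (p r)) (mverts (hist r))) (medges (hist r)) n ws"
  shows "enat (n + 3) \<le> final_score V p N \<or>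
    (\<forall>z. \<exists>ws'. n_free_path V E (insert z (mverts (hist (Suc r)))) (medges (hist (Suc r))) n ws'
       \<and> length ws' < length ws)"
proof -
  have bob: "snd (p r) = bob_edge V E n (insert (fst (p r)) (mverts (hist r))) (medges (hist r))"
    using follows assms(1,2) Suc_ile_eq unfolding follows_def bob_sigma_def by blast
  have "(\<exists>v \<in> V. n + 3 \<le> vertex_score (mverts (hist (Suc r))) (medges (hist (Suc r))) v) \<or>
    (\<forall>z. \<exists>ws'. n_free_path V E (insert z (mverts (hist (Suc r)))) (medges (hist (Suc r))) n ws'
       \<and> length ws' < length ws)"
    unfolding mverts_map_upt_Suc medges_map_upt_Suc bob by (rule bob_edge_progress[OF fp finite_medges])
  then show ?thesis using score_reached[OF assms(2)] by blast
qed

lemma free_path_shrinks: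
  "enat (length h + j) < N \<Longrightarrow> enat (n + 3) \<le> final_score V p N \<or>
    (\<exists>ws. n_free_path V E (insert (fst (p (length h + j))) (mverts (hist (length h + j))))
        (medges (hist (length h + j))) n ws \<and> length ws + j \<le> length vs)"
proof (induction j)
  case 0
  then have "fst (p (length h)) = x" using follows unfolding follows_def by simp
  then show ?case by (intro disjI2 exI[of _ vs]) (simp add: hist_length start)
next
  case (Suc j)
  define r where "r = length h + j"
  have r: "length h \<le> r" "enat (Suc r) \<le> N" "length h + Suc j = Suc r"
    using Suc.prems by (auto simp: r_def)
  then have "enat r < N" by (simp add: Suc_ile_eq)
  show ?case
  proof (cases "enat (n + 3) \<le> final_score V p N")
    case False
    with Suc.IH \<open>enat r < N\<close> obtain ws
      where "n_free_path V E (insert (fst (p r)) (mverts (hist r))) (medges (hist r)) n ws"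
        and "length ws + j \<le> length vs"
      unfolding r_def by blast
    with False bob_round[OF r(1,2)] obtain ws'
      where "n_free_path V E (insert (fst (p (Suc r))) (mverts (hist (Suc r)))) (medges (hist (Suc r))) n ws'"
        and "length ws' < length ws"
      by blast
    with \<open>length ws + j \<le> length vs\<close> show ?thesis unfolding r(3) by auto
  qed simp
qed

lemma free_path_after_round:
  assumes "length h \<le> r" "enat r \<le> N"
  shows "enat (n + 3) \<le> final_score V p N \<or>
    (\<exists>ws. n_free_path V E (mverts (hist r)) (medges (hist r)) n ws)"
proof (cases "r = length h")
  case True
  then show ?thesis
    using n_free_path_unmark[OF start, of "mverts h"] hist_length by auto
next
  case False
  with assms(1) obtain m where m: "r = Suc m" "length h \<le> m" by (cases r) auto
  with assms(2) have "enat m < N" by (simp add: Suc_ile_eq)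
  show ?thesis
  proof (cases "enat (n + 3) \<le> final_score V p N")
    case False
    with free_path_shrinks[of "m - length h"] \<open>enat m < N\<close> m(2) obtain ws
      where "n_free_path V E (insert (fst (p m)) (mverts (hist m))) (medges (hist m)) n ws"
      by auto
    with False bob_round[OF m(2)] assms(2) m(1) obtain ws'
      where "n_free_path V E (insert x (mverts (hist r))) (medges (hist r)) n ws'"
      by blast
    then show ?thesis using n_free_path_unmark by blast
  qed simp
qed

theorem bob_forces_final_score: "enat (n + 3) \<le> final_score V p N"
proof (rule ccontr)
  assume low: "\<not> enat (n + 3) \<le> final_score V p N"
  show False
  proof (cases N)
    case (enat M)
    with follows have "length h \<le> M" unfolding follows_def by simp
    with free_path_after_round[of M] low enat obtain ws
      where ws: "n_free_path V E (mverts (hist M)) (medges (hist M)) n ws"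
      by auto
    from maximal enat have "V \<subseteq> mverts (hist M) \<or> E \<subseteq> medges (hist M)"
      unfolding maximal_play_def by blast
    with n_free_path_final_position[OF ws finite_medges] score_reached[of M] enat low
    show False by simp
  next
    case infinity
    with free_path_shrinks[of "length vs"] low obtain ws
      where "n_free_path V E (insert (fst (p (length h + length vs))) (mverts (hist (length h + length vs))))
        (medges (hist (length h + length vs))) n ws" "length ws + length vs \<le> length vs"
      by auto
    then show False unfolding n_free_path_def Let_def by simp
  qed
qed

end

theorem theorem5p2:
  fixes V :: "'v set" and E :: "'v set set" and n :: nat
    and h :: "('v \<times> 'v set) list" and x :: 'v and vs :: "'v list"
  assumes "graph V E"
    and "legal_hist V E h"
    and "x \<in> V" and "x \<notin> mverts h"
    and "n_free_path V E (insert x (mverts h)) (medges h) n vs"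
  shows "\<exists>\<sigma>. bob_strategy V E \<sigma> \<and>
           (\<forall>p N. maximal_play V E p N \<and> follows h x \<sigma> p N
                  \<longrightarrow> enat (n + 3) \<le> final_score V p N)"
proof (intro exI conjI allI impI)
  show "bob_strategy V E (bob_sigma V E n)" by (rule bob_strategy_bob_sigma)
  fix p N
  assume "maximal_play V E p N \<and> follows h x (bob_sigma V E n) p N"
  with assms(5) interpret bob_free_path_play V E n h x vs p N
    by unfold_locales blast+
  show "enat (n + 3) \<le> final_score V p N" by (rule bob_forces_final_score)
qed

end
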